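(* Consider a mean-variance team stochastic game as described in the context and run Algorithm MV-MAPI (described in the context) from any deterministic initial joint policy. Then $J(\hat{\boldsymbol{\mu}}^{(k,0)})\le J(\hat{\boldsymbol{\mu}}^{(k,1)})\le\cdots\le J(\hat{\boldsymbol{\mu}}^{(k,N)})$ for every outer iteration $k$, so the sequence $(J(\boldsymbol{\mu}^{(k)}))_k$ is monotonically non-decreasing; the algorithm converges, and the joint policy $\tilde{\boldsymbol{\mu}}$ it converges to (the returned joint policy) is a first-order stationary point, i.e. for every agent $i\in\mathcal{N}$ and every $\mu_i\in\mathcal{U}_i$, $\frac{\mathrm{d}}{\mathrm{d}\delta}J\big((1-\delta)\tilde{\mu}_i+\delta\mu_i,\tilde{\boldsymbol{\mu}}_{-i}\big)\big|_{\delta=0}\le 0$ (right derivative).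
   Context: Game: finite agents $\mathcal{N}=\{1,\dots,N\}$, finite state space $\mathcal{S}$, finite action sets $\mathcal{A}_i$, $\mathcal{A}=\prod_i\mathcal{A}_i$, transition kernel $P(s'|s,\boldsymbol{a})$, common reward $r:\mathcal{S}\times\mathcal{A}\to\mathbb{R}$. Policies $\mu_i:\mathcal{S}\to\Delta(\mathcal{A}_i)$ (set $\mathcal{U}_i$); joint policies $\boldsymbol{\mu}\in\mathcal{U}=\prod_i\mathcal{U}_i$ with $\boldsymbol{\mu}(\boldsymbol{a}|s)=\prod_i\mu_i(a_i|s)$; $(\mu_i,\boldsymbol{\mu}_{-i})$ means agent $i$ uses $\mu_i$, others use $\boldsymbol{\mu}_{-i}$; $(1-\delta)\tilde\mu_i+\delta\mu_i$ is the policy $s\mapsto(1-\delta)\tilde\mu_i(\cdot|s)+\delta\mu_i(\cdot|s)$. Standing assumption: the chain $P^{\boldsymbol{\mu}}(s'|s)=\sum_{\boldsymbol{a}}\boldsymbol{\mu}(\boldsymbol{a}|s)P(s'|s,\boldsymbol{a})$ is ergodic for every $\boldsymbol{\mu}\in\mathcal{U}$, stationary distribution $\pi^{\boldsymbol{\mu}}$. $\eta^{\boldsymbol{\mu}}=\sum_s\pi^{\boldsymbol{\mu}}(s)\sum_{\boldsymbol{a}}\boldsymbol{\mu}(\boldsymbol{a}|s)r(s,\boldsymbol{a})$; $\zeta^{\boldsymbol{\mu}}=\sum_s\pi^{\boldsymbol{\mu}}(s)\sum_{\boldsymbol{a}}\boldsymbol{\mu}(\boldsymbol{a}|s)(r(s,\boldsymbol{a})-\eta^{\boldsymbol{\mu}})^2$;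 for fixed $\beta\ge0$, $J(\boldsymbol{\mu})=\eta^{\boldsymbol{\mu}}-\beta\zeta^{\boldsymbol{\mu}}$. $f^{\boldsymbol{\mu}}(s,\boldsymbol{a})=r(s,\boldsymbol{a})-\beta(r(s,\boldsymbol{a})-\eta^{\boldsymbol{\mu}})^2$, $f^{\boldsymbol{\mu}}(s)=\sum_{\boldsymbol{a}}\boldsymbol{\mu}(\boldsymbol{a}|s)f^{\boldsymbol{\mu}}(s,\boldsymbol{a})$; $V_f^{\boldsymbol{\mu}}$ solves $V(s)=f^{\boldsymbol{\mu}}(s)-J(\boldsymbol{\mu})+\sum_{s'}P^{\boldsymbol{\mu}}(s'|s)V(s')$ (unique up to an additive constant); $Q_f^{\boldsymbol{\mu}}(s,\boldsymbol{a})=f^{\boldsymbol{\mu}}(s,\boldsymbol{a})-J(\boldsymbol{\mu})+\sum_{s'}P(s'|s,\boldsymbol{a})V_f^{\boldsymbol{\mu}}(s')$, $A_f^{\boldsymbol{\mu}}=Q_f^{\boldsymbol{\mu}}-V_f^{\boldsymbol{\mu}}$. Algorithm MV-MAPI: start with a deterministic joint policy $\boldsymbol{\mu}^{(0)}$. For $k=0,1,\dots$: set $\hat{\boldsymbol{\mu}}^{(k,0)}=\boldsymbol{\mu}^{(k)}$ and draw a random permutation $i_1,\dots,i_N$ of the agents. For $h=1,\dots,N$: compute $A_f^{\hat{\boldsymbol{\mu}}^{(k,h-1)}}$ and, for every $s$, set $\mu^{(k+1)}_{i_h}(s)$ to be an action $a_{i_h}$ maximizing $\mathbb{E}_{\boldsymbol{a}_{-i_h}\sim\hat{\boldsymbol{\mu}}^{(k,h-1)}_{-i_h}(\cdot|s)}\big[A_f^{\hat{\boldsymbol{\mu}}^{(k,h-1)}}(s,a_{i_h},\boldsymbol{a}_{-i_h})\big]$,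 choosing $\mu^{(k+1)}_{i_h}(s)=\mu^{(k)}_{i_h}(s)$ whenever $\mu^{(k)}_{i_h}(s)$ already attains the maximum; then set $\hat{\boldsymbol{\mu}}^{(k,h)}=(\mu^{(k+1)}_{i_1},\dots,\mu^{(k+1)}_{i_h},\mu^{(k)}_{i_{h+1}},\dots,\mu^{(k)}_{i_N})$. If $\mu^{(k+1)}_i=\mu^{(k)}_i$ for all $i$, stop and return $\boldsymbol{\mu}^{(k)}$; otherwise set $\boldsymbol{\mu}^{(k+1)}=\hat{\boldsymbol{\mu}}^{(k,N)}$ and continue. *)

theory Defs
  imports "HOL-Analysis.Analysis"
begin

text \<open>Agents: finite type 'i. States: finite type 's. Actions of agent i: finite
  nonempty set A i of elements of type 'a.
  A (stochastic) policy of agent i is a map p :: 's \<Rightarrow> 'a \<Rightarrow> real with p s a the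
  probability of a in state s.\<close>

definition jointA :: "('i::finite \<Rightarrow> 'a set) \<Rightarrow> ('i \<Rightarrow> 'a) set" where
  "jointA A = Pi\<^sub>E UNIV A"

definition is_policy :: "('i \<Rightarrow> 'a set) \<Rightarrow> 'i \<Rightarrow> ('s \<Rightarrow> 'a \<Rightarrow> real) \<Rightarrow> bool" where
  "is_policy A i p \<longleftrightarrow> (\<forall>s a. 0 \<le> p s a) \<and> (\<forall>s a. a \<notin> A i \<longrightarrow> p s a = 0)
     \<and> (\<forall>s. (\<Sum>a\<in>A i. p s a) = 1)"

definition is_joint_policy :: "('i \<Rightarrow> 'a set) \<Rightarrow> ('i \<Rightarrow> 's \<Rightarrow> 'a \<Rightarrow> real) \<Rightarrow> bool" where
  "is_joint_policy A mu \<longleftrightarrow> (\<forall>i. is_policy A i (mu i))"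

definition valid_game :: "('i::finite \<Rightarrow> 'a set) \<Rightarrow> ('s::finite \<Rightarrow> ('i \<Rightarrow> 'a) \<Rightarrow> 's \<Rightarrow> real) \<Rightarrow> bool" where
  "valid_game A P \<longleftrightarrow> (\<forall>i. finite (A i) \<and> A i \<noteq> {})
     \<and> (\<forall>s b. b \<in> jointA A \<longrightarrow> (\<forall>s'. 0 \<le> P s b s') \<and> (\<Sum>s'\<in>UNIV. P s b s') = 1)"

definition jprob :: "('i::finite \<Rightarrow> 's \<Rightarrow> 'a \<Rightarrow> real) \<Rightarrow> 's \<Rightarrow> ('i \<Rightarrow> 'a) \<Rightarrow> real" where
  "jprob mu s b = (\<Prod>i\<in>UNIV. mu i s (b i))"

definition Pmu :: "('i::finite \<Rightarrow> 'a set) \<Rightarrow> ('s \<Rightarrow> ('i \<Rightarrow> 'a) \<Rightarrow> 's \<Rightarrow> real)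
     \<Rightarrow> ('i \<Rightarrow> 's \<Rightarrow> 'a \<Rightarrow> real) \<Rightarrow> 's \<Rightarrow> 's \<Rightarrow> real" where
  "Pmu A P mu s s' = (\<Sum>b\<in>jointA A. jprob mu s b * P s b s')"

fun mpow :: "('s::finite \<Rightarrow> 's \<Rightarrow> real) \<Rightarrow> nat \<Rightarrow> 's \<Rightarrow> 's \<Rightarrow> real" where
  "mpow M 0 = (\<lambda>s s'. if s = s' then 1 else 0)"
| "mpow M (Suc n) = (\<lambda>s s'. \<Sum>t\<in>UNIV. mpow M n s t * M t s')"

definition irreducible_chain :: "('s::finite \<Rightarrow> 's \<Rightarrow> real) \<Rightarrow> bool" where
  "irreducible_chain M \<longleftrightarrow> (\<forall>s s'. \<exists>n. 0 < mpow M n s s')"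

definition aperiodic_chain :: "('s::finite \<Rightarrow> 's \<Rightarrow> real) \<Rightarrow> bool" where
  "aperiodic_chain M \<longleftrightarrow> (\<forall>s. Gcd {n. 0 < n \<and> 0 < mpow M n s s} = 1)"

definition ergodic_chain :: "('s::finite \<Rightarrow> 's \<Rightarrow> real) \<Rightarrow> bool" where
  "ergodic_chain M \<longleftrightarrow> irreducible_chain M \<and> aperiodic_chain M"

text \<open>The (unique, under ergodicity) stationary distribution.\<close>
definition stat_dist :: "('s::finite \<Rightarrow> 's \<Rightarrow> real) \<Rightarrow> 's \<Rightarrow> real" where
  "stat_dist M = (THE pi. (\<forall>s. 0 \<le> pi s) \<and> (\<Sum>s\<in>UNIV. pi s) = 1
                      \<and> (\<forall>s'. (\<Sum>s\<in>UNIV. pi s * M s s') = pi s'))"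

definition eta :: "('i::finite \<Rightarrow> 'a set) \<Rightarrow> ('s::finite \<Rightarrow> ('i \<Rightarrow> 'a) \<Rightarrow> 's \<Rightarrow> real)
     \<Rightarrow> ('s \<Rightarrow> ('i \<Rightarrow> 'a) \<Rightarrow> real) \<Rightarrow> ('i \<Rightarrow> 's \<Rightarrow> 'a \<Rightarrow> real) \<Rightarrow> real" where
  "eta A P r mu = (\<Sum>s\<in>UNIV. stat_dist (Pmu A P mu) s *
                    (\<Sum>b\<in>jointA A. jprob mu s b * r s b))"

definition zeta :: "('i::finite \<Rightarrow> 'a set) \<Rightarrow> ('s::finite \<Rightarrow> ('i \<Rightarrow> 'a) \<Rightarrow> 's \<Rightarrow> real)
     \<Rightarrow> ('s \<Rightarrow> ('i \<Rightarrow> 'a) \<Rightarrow> real) \<Rightarrow> ('i \<Rightarrow> 's \<Rightarrow> 'a \<Rightarrow> real) \<Rightarrow> real" where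
  "zeta A P r mu = (\<Sum>s\<in>UNIV. stat_dist (Pmu A P mu) s *
                    (\<Sum>b\<in>jointA A. jprob mu s b * (r s b - eta A P r mu)\<^sup>2))"

definition Jmv :: "('i::finite \<Rightarrow> 'a set) \<Rightarrow> ('s::finite \<Rightarrow> ('i \<Rightarrow> 'a) \<Rightarrow> 's \<Rightarrow> real)
     \<Rightarrow> ('s \<Rightarrow> ('i \<Rightarrow> 'a) \<Rightarrow> real) \<Rightarrow> real \<Rightarrow> ('i \<Rightarrow> 's \<Rightarrow> 'a \<Rightarrow> real) \<Rightarrow> real" where
  "Jmv A P r \<beta> mu = eta A P r mu - \<beta> * zeta A P r mu"

definition fmv :: "('i::finite \<Rightarrow> 'a set) \<Rightarrow> ('s::finite \<Rightarrow> ('i \<Rightarrow> 'a) \<Rightarrow> 's \<Rightarrow> real)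
     \<Rightarrow> ('s \<Rightarrow> ('i \<Rightarrow> 'a) \<Rightarrow> real) \<Rightarrow> real \<Rightarrow> ('i \<Rightarrow> 's \<Rightarrow> 'a \<Rightarrow> real) \<Rightarrow> 's \<Rightarrow> ('i \<Rightarrow> 'a) \<Rightarrow> real" where
  "fmv A P r \<beta> mu s b = r s b - \<beta> * (r s b - eta A P r mu)\<^sup>2"

definition fbar :: "('i::finite \<Rightarrow> 'a set) \<Rightarrow> ('s::finite \<Rightarrow> ('i \<Rightarrow> 'a) \<Rightarrow> 's \<Rightarrow> real)
     \<Rightarrow> ('s \<Rightarrow> ('i \<Rightarrow> 'a) \<Rightarrow> real) \<Rightarrow> real \<Rightarrow> ('i \<Rightarrow> 's \<Rightarrow> 'a \<Rightarrow> real) \<Rightarrow> 's \<Rightarrow> real" where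
  "fbar A P r \<beta> mu s = (\<Sum>b\<in>jointA A. jprob mu s b * fmv A P r \<beta> mu s b)"

text \<open>A solution of the Poisson equation (unique up to an additive constant under
  ergodicity; the advantage below does not depend on the choice).\<close>
definition Vf :: "('i::finite \<Rightarrow> 'a set) \<Rightarrow> ('s::finite \<Rightarrow> ('i \<Rightarrow> 'a) \<Rightarrow> 's \<Rightarrow> real)
     \<Rightarrow> ('s \<Rightarrow> ('i \<Rightarrow> 'a) \<Rightarrow> real) \<Rightarrow> real \<Rightarrow> ('i \<Rightarrow> 's \<Rightarrow> 'a \<Rightarrow> real) \<Rightarrow> 's \<Rightarrow> real" where
  "Vf A P r \<beta> mu = (SOME V. \<forall>s. V s = fbar A P r \<beta> mu s - Jmv A P r \<beta> mu
                        + (\<Sum>s'\<in>UNIV. Pmu A P mu s s' * V s'))"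

definition Qf :: "('i::finite \<Rightarrow> 'a set) \<Rightarrow> ('s::finite \<Rightarrow> ('i \<Rightarrow> 'a) \<Rightarrow> 's \<Rightarrow> real)
     \<Rightarrow> ('s \<Rightarrow> ('i \<Rightarrow> 'a) \<Rightarrow> real) \<Rightarrow> real \<Rightarrow> ('i \<Rightarrow> 's \<Rightarrow> 'a \<Rightarrow> real) \<Rightarrow> 's \<Rightarrow> ('i \<Rightarrow> 'a) \<Rightarrow> real" where
  "Qf A P r \<beta> mu s b = fmv A P r \<beta> mu s b - Jmv A P r \<beta> mu
                        + (\<Sum>s'\<in>UNIV. P s b s' * Vf A P r \<beta> mu s')"

definition Af :: "('i::finite \<Rightarrow> 'a set) \<Rightarrow> ('s::finite \<Rightarrow> ('i \<Rightarrow> 'a) \<Rightarrow> 's \<Rightarrow> real)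
     \<Rightarrow> ('s \<Rightarrow> ('i \<Rightarrow> 'a) \<Rightarrow> real) \<Rightarrow> real \<Rightarrow> ('i \<Rightarrow> 's \<Rightarrow> 'a \<Rightarrow> real) \<Rightarrow> 's \<Rightarrow> ('i \<Rightarrow> 'a) \<Rightarrow> real" where
  "Af A P r \<beta> mu s b = Qf A P r \<beta> mu s b - Vf A P r \<beta> mu s"

definition exp_adv :: "('i::finite \<Rightarrow> 'a set) \<Rightarrow> ('s::finite \<Rightarrow> ('i \<Rightarrow> 'a) \<Rightarrow> 's \<Rightarrow> real)
     \<Rightarrow> ('s \<Rightarrow> ('i \<Rightarrow> 'a) \<Rightarrow> real) \<Rightarrow> real \<Rightarrow> ('i \<Rightarrow> 's \<Rightarrow> 'a \<Rightarrow> real) \<Rightarrow> 'i \<Rightarrow> 's \<Rightarrow> 'a \<Rightarrow> real" where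
  "exp_adv A P r \<beta> mu i s a =
     (\<Sum>b\<in>{b\<in>jointA A. b i = a}. (\<Prod>j\<in>UNIV - {i}. mu j s (b j)) * Af A P r \<beta> mu s b)"

definition det_joint :: "('i \<Rightarrow> 's \<Rightarrow> 'a) \<Rightarrow> 'i \<Rightarrow> 's \<Rightarrow> 'a \<Rightarrow> real" where
  "det_joint d = (\<lambda>i s a. if a = d i s then 1 else 0)"

definition mix_pol :: "real \<Rightarrow> ('s \<Rightarrow> 'a \<Rightarrow> real) \<Rightarrow> ('s \<Rightarrow> 'a \<Rightarrow> real) \<Rightarrow> 's \<Rightarrow> 'a \<Rightarrow> real" where
  "mix_pol \<delta> p q = (\<lambda>s a. (1 - \<delta>) * p s a + \<delta> * q s a)"

definition first_order_stationary :: "('i::finite \<Rightarrow> 'a set) \<Rightarrow> ('s::finite \<Rightarrow> ('i \<Rightarrow> 'a) \<Rightarrow> 's \<Rightarrow> real)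
     \<Rightarrow> ('s \<Rightarrow> ('i \<Rightarrow> 'a) \<Rightarrow> real) \<Rightarrow> real \<Rightarrow> ('i \<Rightarrow> 's \<Rightarrow> 'a \<Rightarrow> real) \<Rightarrow> bool" where
  "first_order_stationary A P r \<beta> mu \<longleftrightarrow>
     (\<forall>i p. is_policy A i p \<longrightarrow>
        (\<exists>D. ((\<lambda>\<delta>. Jmv A P r \<beta> (mu(i := mix_pol \<delta> (mu i) p))) has_real_derivative D)
                (at 0 within {0..1}) \<and> D \<le> 0))"

text \<open>Intermediate policies hat-mu^(k,h) of MV-MAPI: d k is mu^(k) (deterministic),
  perm k the permutation i_1..i_N drawn in iteration k.\<close>
definition hat_pol :: "(nat \<Rightarrow> 'i \<Rightarrow> 's \<Rightarrow> 'a) \<Rightarrow> (nat \<Rightarrow> 'i list) \<Rightarrow> nat \<Rightarrow> nat \<Rightarrow> 'i \<Rightarrow> 's \<Rightarrow> 'a" where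
  "hat_pol d perm k h = (\<lambda>j. if j \<in> set (take h (perm k)) then d (Suc k) j else d k j)"

text \<open>A run of MV-MAPI (for any realisation of the random permutations and any
  admissible choice among maximisers).  After the stopping iteration the
  sequence stays constant, so runs are modelled as infinite sequences.\<close>
definition mvmapi_run :: "('i::finite \<Rightarrow> 'a set) \<Rightarrow> ('s::finite \<Rightarrow> ('i \<Rightarrow> 'a) \<Rightarrow> 's \<Rightarrow> real)
     \<Rightarrow> ('s \<Rightarrow> ('i \<Rightarrow> 'a) \<Rightarrow> real) \<Rightarrow> real \<Rightarrow> (nat \<Rightarrow> 'i \<Rightarrow> 's \<Rightarrow> 'a) \<Rightarrow> (nat \<Rightarrow> 'i list) \<Rightarrow> bool" where
  "mvmapi_run A P r \<beta> d perm \<longleftrightarrow>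
     (\<forall>i s. d 0 i s \<in> A i) \<and>
     (\<forall>k. distinct (perm k) \<and> set (perm k) = UNIV) \<and>
     (\<forall>k h. h < length (perm k) \<longrightarrow>
        (let i = perm k ! h; mu = det_joint (hat_pol d perm k h) in
         \<forall>s. d (Suc k) i s \<in> A i
           \<and> (\<forall>a\<in>A i. exp_adv A P r \<beta> mu i s a \<le> exp_adv A P r \<beta> mu i s (d (Suc k) i s))
           \<and> ((\<forall>a\<in>A i. exp_adv A P r \<beta> mu i s a \<le> exp_adv A P r \<beta> mu i s (d k i s))
                 \<longrightarrow> d (Suc k) i s = d k i s)))"

end

theory Submission
  imports Defs
begin

text \<open>
  Write \<open>\<pi>\<^sup>\<mu>\<close> for the stationary distribution and \<open>A\<^sup>\<mu>\<close> for the advantage \<open>A\<^sub>f\<^sup>\<mu>\<close>.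
  The Poisson equation for \<open>V\<^sub>f\<^sup>\<mu>\<close> yields a performance difference identity
  \<open>J(\<mu>') = J(\<mu>) + E\<^bsub>\<pi>\<^sup>\<mu>', \<mu>'\<^esub>[A\<^sup>\<mu>] + \<beta> (\<eta>\<^sup>\<mu>' - \<eta>\<^sup>\<mu>)\<^sup>2\<close>.
  If one agent of a deterministic joint policy switches to actions maximising its expected
  advantage, the middle term is a \<open>\<pi>\<^sup>\<mu>'\<close>-average of nonnegative gains (the current action has
  expected advantage 0), so \<open>J\<close> does not decrease; by the tie-breaking rule and \<open>\<pi>\<^sup>\<mu>' > 0\<close>
  it increases strictly whenever an action changes. Hence no deterministic joint policy is
  visited twice, and since there are finitely many the run becomes constant.
  For the mixture \<open>\<mu>\<^sub>\<delta>\<close> of the limit with a policy \<open>p\<close> of agent \<open>i\<close>, the same identity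
  reads \<open>J(\<mu>\<^sub>\<delta>) - J(\<mu>) = \<delta> E\<^bsub>\<pi>\<^sup>\<mu>\<^sup>\<delta>, p\<^esub>[A\<^sup>\<mu>] + \<beta> (\<eta>\<^sup>\<mu>\<^sup>\<delta> - \<eta>\<^sup>\<mu>)\<^sup>2\<close>, and stationary expectations
  are Lipschitz in the transition matrix (again by the Poisson equation), so this is
  \<open>\<delta> E\<^bsub>\<pi>\<^sup>\<mu>, p\<^esub>[A\<^sup>\<mu>] + O(\<delta>\<^sup>2)\<close>. The right derivative is thus an average of expected
  advantages, which is \<open>\<le> 0\<close> at a fixed point of the algorithm.
\<close>

lemma abs_sum_prob_mult_le:
  fixes pd f :: "'s::finite \<Rightarrow> real"
  assumes nonneg: "\<And>s. 0 \<le> pd s" and sum1: "(\<Sum>s\<in>UNIV. pd s) = 1"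
  shows "\<bar>\<Sum>s\<in>UNIV. pd s * f s\<bar> \<le> (\<Sum>s\<in>UNIV. \<bar>f s\<bar>)"
proof -
  have le1: "pd s \<le> 1" for s
    using member_le_sum[of s UNIV pd] nonneg sum1 by simp
  have "\<bar>\<Sum>s\<in>UNIV. pd s * f s\<bar> \<le> (\<Sum>s\<in>UNIV. pd s * \<bar>f s\<bar>)"
    using sum_abs[of "\<lambda>s. pd s * f s" UNIV] nonneg by (simp add: abs_mult)
  also have "\<dots> \<le> (\<Sum>s\<in>UNIV. \<bar>f s\<bar>)"
    by (intro sum_mono mult_left_le_one_le) (auto simp: nonneg le1)
  finally show ?thesis .
qed

lemma has_real_derivative_quadratic_remainder:
  assumes "\<And>y. y \<in> S \<Longrightarrow> \<bar>f y - f x - (y - x) * D\<bar> \<le> B * (y - x)\<^sup>2"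
  shows "(f has_real_derivative D) (at x within S)"
  unfolding has_field_derivative_iff
proof (subst Lim_null, rule Lim_null_comparison)
  have "\<bar>(f y - f x) / (y - x) - D\<bar> \<le> B * \<bar>y - x\<bar>" if "y \<in> S" "y \<noteq> x" for y
  proof -
    have "\<bar>(f y - f x) / (y - x) - D\<bar> = \<bar>f y - f x - (y - x) * D\<bar> / \<bar>y - x\<bar>"
      using that by (simp add: diff_divide_distrib flip: abs_divide)
    also have "\<dots> \<le> B * (y - x)\<^sup>2 / \<bar>y - x\<bar>"
      using assms[OF \<open>y \<in> S\<close>] by (rule divide_right_mono) simp
    also have "\<dots> = B * \<bar>y - x\<bar>"
      using that by (metis abs_mult_self_eq nonzero_mult_div_cancel_right power2_eq_square
          times_divide_eq_right abs_eq_0 eq_iff_diff_eq_0)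
    finally show ?thesis .
  qed
  then show "\<forall>\<^sub>F y in at x within S. norm ((f y - f x) / (y - x) - D) \<le> B * \<bar>y - x\<bar>"
    unfolding eventually_at_filter by (auto intro: always_eventually)
  have "((\<lambda>y. y - x) \<longlongrightarrow> 0) (at x within S)"
    using tendsto_diff[OF tendsto_ident_at[of x S] tendsto_const[of x]] by simp
  then show "((\<lambda>y. B * \<bar>y - x\<bar>) \<longlongrightarrow> 0) (at x within S)"
    by (intro tendsto_mult_right_zero tendsto_rabs_zero)
qed

lemma eventually_const_of_strict_improvement:
  fixes x :: "nat \<Rightarrow> 'b" and J :: "'b \<Rightarrow> 'c::linorder"
  assumes fin: "finite (range x)"
    and improve: "\<And>k. x (Suc k) \<noteq> x k \<Longrightarrow> J (x k) < J (x (Suc k))"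
    and stays: "\<And>k. x (Suc k) = x k \<Longrightarrow> x (Suc (Suc k)) = x (Suc k)"
  shows "\<exists>K. \<forall>k\<ge>K. x k = x K"
proof (cases "\<exists>K. x (Suc K) = x K")
  case True
  then obtain K where K: "x (Suc K) = x K" by blast
  have "x (Suc (K + n)) = x (K + n)" for n
    by (induction n) (use K stays in auto)
  then have "x (K + n) = x K" for n
    by (induction n) auto
  then show ?thesis
    by (metis le_add_diff_inverse)
next
  case False
  then have "strict_mono (J \<circ> x)"
    by (intro strict_monoI_Suc) (simp add: improve)
  then have "inj x"
    using strict_mono_imp_inj_on inj_on_imageI2 by blast
  with fin have "finite (UNIV :: nat set)"
    by (rule finite_imageD)
  then show ?thesis by simp
qed

lemma distinct_nth_notin_set_take: "distinct xs \<Longrightarrow> h < length xs \<Longrightarrow> xs ! h \<notin> set (take h xs)"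
  by (auto simp: in_set_conv_nth distinct_conv_nth)

section \<open>Finite Markov chains\<close>

definition stochastic_matrix :: "('s::finite \<Rightarrow> 's \<Rightarrow> real) \<Rightarrow> bool" where
  "stochastic_matrix M \<longleftrightarrow> (\<forall>s t. 0 \<le> M s t) \<and> (\<forall>s. (\<Sum>t\<in>UNIV. M s t) = 1)"

definition stationary_distribution :: "('s::finite \<Rightarrow> 's \<Rightarrow> real) \<Rightarrow> ('s \<Rightarrow> real) \<Rightarrow> bool" where
  "stationary_distribution M pd \<longleftrightarrow> (\<forall>s. 0 \<le> pd s) \<and> (\<Sum>s\<in>UNIV. pd s) = 1
     \<and> (\<forall>t. (\<Sum>s\<in>UNIV. pd s * M s t) = pd t)"

lemma mpow_nonneg: "stochastic_matrix M \<Longrightarrow> 0 \<le> mpow M n s t"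
  by (induction n arbitrary: t) (auto simp: stochastic_matrix_def intro!: sum_nonneg)

lemma stationary_distribution_sum_transition:
  assumes "stationary_distribution M pd"
  shows "(\<Sum>s\<in>UNIV. pd s * (\<Sum>t\<in>UNIV. M s t * f t)) = (\<Sum>t\<in>UNIV. pd t * f t)"
proof -
  have "(\<Sum>s\<in>UNIV. pd s * (\<Sum>t\<in>UNIV. M s t * f t)) = (\<Sum>t\<in>UNIV. (\<Sum>s\<in>UNIV. pd s * M s t) * f t)"
    by (simp add: sum_distrib_left sum_distrib_right mult.assoc) (rule sum.swap)
  also have "\<dots> = (\<Sum>t\<in>UNIV. pd t * f t)"
    using assms by (simp add: stationary_distribution_def)
  finally show ?thesis .
qed

lemma stationary_distribution_mpow:
  assumes "stationary_distribution M pd"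
  shows "(\<Sum>s\<in>UNIV. pd s * mpow M n s t) = pd t"
proof (induction n arbitrary: t)
  case 0
  have "(\<Sum>s\<in>UNIV. pd s * mpow M 0 s t) = (\<Sum>s\<in>UNIV. if s = t then pd s else 0)"
    by (rule sum.cong) auto
  then show ?case by simp
next
  case (Suc n)
  have "(\<Sum>s\<in>UNIV. pd s * mpow M (Suc n) s t) = (\<Sum>u\<in>UNIV. (\<Sum>s\<in>UNIV. pd s * mpow M n s u) * M u t)"
    by (simp add: sum_distrib_left sum_distrib_right mult.assoc) (rule sum.swap)
  also have "\<dots> = pd t"
    using Suc.IH assms by (simp add: stationary_distribution_def)
  finally show ?case .
qed

lemma irreducible_harmonic_const:
  assumes stoch: "stochastic_matrix M" and irr: "irreducible_chain M"
    and harmonic: "\<And>s. V s = (\<Sum>t\<in>UNIV. M s t * V t)"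
  shows "V s = V s'"
proof -
  define m where "m = Max (range V)"
  have le: "V t \<le> m" for t
    unfolding m_def by simp
  have "m \<in> range V"
    unfolding m_def by (rule Max_in) auto
  then obtain s0 where s0: "V s0 = m" by auto
  \<comment> \<open>maximum principle: the maximum propagates along positive transitions\<close>
  have propagate: "V t = m" if "0 < M u t" and "V u = m" for u t
  proof -
    have "(\<Sum>w\<in>UNIV. M u w * (m - V w)) = m * (\<Sum>w\<in>UNIV. M u w) - (\<Sum>w\<in>UNIV. M u w * V w)"
      by (simp add: algebra_simps sum_subtractf sum_distrib_left)
    also have "\<dots> = 0"
      using stoch harmonic[of u] \<open>V u = m\<close> by (simp add: stochastic_matrix_def)
    finally have "M u t * (m - V t) = 0"
      using sum_nonneg_eq_0_iff[of UNIV "\<lambda>w. M u w * (m - V w)"] stoch le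
      by (simp add: stochastic_matrix_def)
    with \<open>0 < M u t\<close> le show ?thesis by simp
  qed
  have reach: "0 < mpow M n s0 t \<Longrightarrow> V t = m" for n t
  proof (induction n arbitrary: t)
    case 0
    then show ?case using s0 by (simp split: if_splits)
  next
    case (Suc n)
    then have "0 < (\<Sum>u\<in>UNIV. mpow M n s0 u * M u t)" by simp
    then obtain u where u: "0 < mpow M n s0 u * M u t"
      by (meson not_le sum_nonpos)
    moreover have "0 \<le> mpow M n s0 u" "0 \<le> M u t"
      using stoch mpow_nonneg by (auto simp: stochastic_matrix_def)
    ultimately show ?case
      using Suc.IH propagate by (auto simp: zero_less_mult_iff)
  qed
  have "V t = m" for t
    using irr reach unfolding irreducible_chain_def by blast
  then show ?thesis by simp
qed

lemma stochastic_matrix_left_fixed_vector: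
  fixes M :: "'s::finite \<Rightarrow> 's \<Rightarrow> real"
  assumes stoch: "stochastic_matrix M"
  obtains z t0 where "z t0 \<noteq> 0" "\<And>t. (\<Sum>s\<in>UNIV. z s * M s t) = z t"
proof -
  \<comment> \<open>\<open>I - M\<^sup>T\<close> is not surjective since its image sums to zero, so it has a nonzero kernel\<close>
  define L where "L = (\<lambda>x::real^'s. \<chi> t. x$t - (\<Sum>s\<in>UNIV. x$s * M s t))"
  have lin: "linear L"
  proof (rule linearI)
    show "L (x + y) = L x + L y" for x y
      by (simp add: L_def vec_eq_iff distrib_right sum.distrib)
    show "L (c *\<^sub>R x) = c *\<^sub>R L x" for c x
      by (simp add: L_def vec_eq_iff sum_distrib_left right_diff_distrib mult.assoc)
  qed
  have sum_L: "(\<Sum>t\<in>UNIV. L x $ t) = 0" for x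
  proof -
    have "(\<Sum>t\<in>UNIV. \<Sum>s\<in>UNIV. x$s * M s t) = (\<Sum>s\<in>UNIV. x$s * (\<Sum>t\<in>UNIV. M s t))"
      by (subst sum.swap) (simp add: sum_distrib_left)
    then show ?thesis
      using stoch by (simp add: L_def sum_subtractf stochastic_matrix_def)
  qed
  have "\<not> surj L"
  proof
    assume "surj L"
    then obtain x where "L x = (\<chi> t. 1)" by (metis surjD)
    then show False using sum_L[of x] by simp
  qed
  then have "\<not> inj L"
    using linear_injective_imp_surjective[OF lin _ refl] by blast
  then obtain z where z: "z \<noteq> 0" "L z = 0"
    using linear_injective_0[OF lin] by blast
  obtain t0 where "z$t0 \<noteq> 0"
    using z(1) by (metis vec_eq_iff zero_index)
  moreover have "(\<Sum>s\<in>UNIV. z$s * M s t) = z$t" for t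
    using arg_cong[OF z(2), of "\<lambda>x. x $ t"] by (simp add: L_def)
  ultimately show ?thesis
    by (rule that)
qed

lemma stationary_distribution_exists:
  fixes M :: "'s::finite \<Rightarrow> 's \<Rightarrow> real"
  assumes stoch: "stochastic_matrix M"
  obtains pd where "stationary_distribution M pd"
proof -
  obtain z t0 where z: "z t0 \<noteq> 0" and fix_z: "\<And>t. (\<Sum>s\<in>UNIV. z s * M s t) = z t"
    using stochastic_matrix_left_fixed_vector[OF stoch] by blast
  \<comment> \<open>\<open>\<bar>z\<bar>\<close> is subinvariant with the same total mass, hence invariant\<close>
  define w where "w s = \<bar>z s\<bar>" for s
  have sub: "w t \<le> (\<Sum>s\<in>UNIV. w s * M s t)" for t
  proof -
    have "w t \<le> (\<Sum>s\<in>UNIV. \<bar>z s * M s t\<bar>)"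
      using sum_abs[of "\<lambda>s. z s * M s t" UNIV] by (simp add: w_def fix_z)
    also have "\<dots> = (\<Sum>s\<in>UNIV. w s * M s t)"
      using stoch by (simp add: w_def abs_mult stochastic_matrix_def)
    finally show ?thesis .
  qed
  have "(\<Sum>t\<in>UNIV. \<Sum>s\<in>UNIV. w s * M s t) = (\<Sum>s\<in>UNIV. w s * (\<Sum>t\<in>UNIV. M s t))"
    by (subst sum.swap) (simp add: sum_distrib_left)
  then have "(\<Sum>t\<in>UNIV. (\<Sum>s\<in>UNIV. w s * M s t) - w t) = 0"
    using stoch by (simp add: sum_subtractf stochastic_matrix_def)
  then have inv: "(\<Sum>s\<in>UNIV. w s * M s t) = w t" for t
    using sum_nonneg_eq_0_iff[of UNIV "\<lambda>t. (\<Sum>s\<in>UNIV. w s * M s t) - w t"] sub by simp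
  have pos: "0 < (\<Sum>t\<in>UNIV. w t)"
    using z by (intro sum_pos2[of UNIV t0]) (auto simp: w_def)
  have "stationary_distribution M (\<lambda>s. w s / (\<Sum>t\<in>UNIV. w t))"
    using pos inv by (simp add: stationary_distribution_def w_def sum_divide_distrib[symmetric])
  then show ?thesis by (rule that)
qed

lemma irreducible_harmonic_eq_0:
  assumes stoch: "stochastic_matrix M" and irr: "irreducible_chain M"
    and pd: "stationary_distribution M pd"
    and harmonic: "\<And>s. V s = (\<Sum>t\<in>UNIV. M s t * V t)" and mean0: "(\<Sum>t\<in>UNIV. pd t * V t) = 0"
  shows "V s = 0"
proof -
  have "(\<Sum>t\<in>UNIV. pd t * V t) = (\<Sum>t\<in>UNIV. pd t) * V s"
    unfolding sum_distrib_right
    using irreducible_harmonic_const[OF stoch irr harmonic] by (intro sum.cong) auto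
  then show ?thesis
    using mean0 pd by (simp add: stationary_distribution_def)
qed

lemma poisson_equation_solvable:
  fixes M :: "'s::finite \<Rightarrow> 's \<Rightarrow> real" and g :: "'s \<Rightarrow> real"
  assumes stoch: "stochastic_matrix M" and irr: "irreducible_chain M"
    and pd: "stationary_distribution M pd"
  obtains V where "\<And>s. V s = g s - (\<Sum>t\<in>UNIV. pd t * g t) + (\<Sum>t\<in>UNIV. M s t * V t)"
proof -
  \<comment> \<open>\<open>x \<mapsto> (I - M) x + \<langle>pd, x\<rangle> 1\<close> is injective, hence surjective\<close>
  define T where "T = (\<lambda>x::real^'s. \<chi> s. x$s - (\<Sum>t\<in>UNIV. M s t * x$t) + (\<Sum>t\<in>UNIV. pd t * x$t))"
  have lin: "linear T"
  proof (rule linearI)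
    show "T (x + y) = T x + T y" for x y
      by (simp add: T_def vec_eq_iff distrib_left sum.distrib)
    show "T (c *\<^sub>R x) = c *\<^sub>R T x" for c x
      by (simp add: T_def vec_eq_iff sum_distrib_left right_diff_distrib distrib_left mult.left_commute)
  qed
  have pd_T: "(\<Sum>s\<in>UNIV. pd s * T x $ s) = (\<Sum>t\<in>UNIV. pd t * x$t)" for x
  proof -
    have "(\<Sum>s\<in>UNIV. pd s * T x $ s) = (\<Sum>s\<in>UNIV. pd s * x$s)
        - (\<Sum>s\<in>UNIV. pd s * (\<Sum>t\<in>UNIV. M s t * x$t)) + (\<Sum>s\<in>UNIV. pd s) * (\<Sum>t\<in>UNIV. pd t * x$t)"
      by (simp add: T_def right_diff_distrib distrib_left sum.distrib sum_subtractf
          sum_distrib_right[symmetric])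
    then show ?thesis
      using stationary_distribution_sum_transition[OF pd, of "\<lambda>t. x$t"] pd
      by (simp add: stationary_distribution_def)
  qed
  have "inj T"
    unfolding linear_injective_0[OF lin]
  proof (intro allI impI)
    fix x assume Tx: "T x = 0"
    have mean0: "(\<Sum>t\<in>UNIV. pd t * x$t) = 0"
      using pd_T[of x] Tx by simp
    have "x$s = (\<Sum>t\<in>UNIV. M s t * x$t)" for s
      using arg_cong[OF Tx, of "\<lambda>x. x $ s"] mean0 by (simp add: T_def)
    then have "x$s = 0" for s
      by (rule irreducible_harmonic_eq_0[OF stoch irr pd _ mean0])
    then show "x = 0"
      by (simp add: vec_eq_iff)
  qed
  then have "surj T"
    using linear_injective_imp_surjective[OF lin _ refl] by blast
  then obtain V where TV: "T V = (\<chi> s. g s - (\<Sum>t\<in>UNIV. pd t * g t))"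
    by (metis surjD)
  have "(\<Sum>t\<in>UNIV. pd t * V$t) = (\<Sum>s\<in>UNIV. pd s * g s) - (\<Sum>s\<in>UNIV. pd s) * (\<Sum>t\<in>UNIV. pd t * g t)"
    using pd_T[of V] by (simp add: TV right_diff_distrib sum_subtractf sum_distrib_right)
  then have "(\<Sum>t\<in>UNIV. pd t * V$t) = 0"
    using pd by (simp add: stationary_distribution_def)
  then have "V$s = g s - (\<Sum>t\<in>UNIV. pd t * g t) + (\<Sum>t\<in>UNIV. M s t * V$t)" for s
    using arg_cong[OF TV, of "\<lambda>x. x $ s"] by (simp add: T_def)
  then show ?thesis by (rule that)
qed

lemma stationary_expectation_difference:
  fixes M M' :: "'s::finite \<Rightarrow> 's \<Rightarrow> real"
  assumes pd': "stationary_distribution M' pd'"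
    and V: "\<And>s. V s = g s - c + (\<Sum>t\<in>UNIV. M s t * V t)"
  shows "(\<Sum>s\<in>UNIV. pd' s * g s) - c = (\<Sum>s\<in>UNIV. pd' s * (\<Sum>t\<in>UNIV. (M' s t - M s t) * V t))"
proof -
  define MV M'V where "MV s = (\<Sum>t\<in>UNIV. M s t * V t)" and "M'V s = (\<Sum>t\<in>UNIV. M' s t * V t)" for s
  have g_eq: "g s = V s - MV s + c" for s
    using V[of s] by (simp add: MV_def)
  have "(\<Sum>s\<in>UNIV. pd' s * g s) = (\<Sum>s\<in>UNIV. pd' s * V s) - (\<Sum>s\<in>UNIV. pd' s * MV s)
      + (\<Sum>s\<in>UNIV. pd' s) * c"
    unfolding g_eq by (simp add: algebra_simps sum.distrib sum_subtractf sum_distrib_left)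
  also have "(\<Sum>s\<in>UNIV. pd' s * V s) = (\<Sum>s\<in>UNIV. pd' s * M'V s)"
    using stationary_distribution_sum_transition[OF pd', of V] by (simp add: M'V_def)
  finally have "(\<Sum>s\<in>UNIV. pd' s * g s) = (\<Sum>s\<in>UNIV. pd' s * M'V s) - (\<Sum>s\<in>UNIV. pd' s * MV s) + c"
    using pd' by (simp add: stationary_distribution_def)
  moreover have "(\<Sum>s\<in>UNIV. pd' s * (\<Sum>t\<in>UNIV. (M' s t - M s t) * V t))
      = (\<Sum>s\<in>UNIV. pd' s * M'V s) - (\<Sum>s\<in>UNIV. pd' s * MV s)"
    by (simp add: M'V_def MV_def left_diff_distrib right_diff_distrib sum_subtractf)
  ultimately show ?thesis by simp
qed

lemma stationary_distribution_unique:
  fixes M :: "'s::finite \<Rightarrow> 's \<Rightarrow> real"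
  assumes stoch: "stochastic_matrix M" and irr: "irreducible_chain M"
    and pd: "stationary_distribution M pd" and pd': "stationary_distribution M pd'"
  shows "pd' = pd"
proof
  fix s0 :: 's
  define g where "g s = (if s = s0 then 1 else 0 :: real)" for s
  have sum_g: "(\<Sum>s\<in>UNIV. q s * g s) = q s0" for q
  proof -
    have "(\<Sum>s\<in>UNIV. q s * g s) = (\<Sum>s\<in>UNIV. if s = s0 then q s else 0)"
      by (rule sum.cong) (auto simp: g_def)
    then show ?thesis by simp
  qed
  obtain V where V: "\<And>s. V s = g s - (\<Sum>t\<in>UNIV. pd t * g t) + (\<Sum>t\<in>UNIV. M s t * V t)"
    using poisson_equation_solvable[OF stoch irr pd] by blast
  have "(\<Sum>s\<in>UNIV. pd' s * g s) - (\<Sum>t\<in>UNIV. pd t * g t) = 0"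
    using stationary_expectation_difference[OF pd' V] by simp
  then show "pd' s0 = pd s0"
    by (simp add: sum_g)
qed

lemma stat_dist_eqI:
  assumes "stochastic_matrix M" "irreducible_chain M" "stationary_distribution M pd"
  shows "stat_dist M = pd"
proof -
  have "stat_dist M = (THE p. stationary_distribution M p)"
    by (simp add: stat_dist_def stationary_distribution_def)
  also have "\<dots> = pd"
    using assms stationary_distribution_unique by blast
  finally show ?thesis .
qed

lemma stationary_distribution_pos:
  assumes stoch: "stochastic_matrix M" and irr: "irreducible_chain M"
    and pd: "stationary_distribution M pd"
  shows "0 < pd t"
proof -
  have "\<exists>s. 0 < pd s"
  proof (rule ccontr)
    assume "\<nexists>s. 0 < pd s"
    then have "(\<Sum>s\<in>UNIV. pd s) \<le> 0" by (meson not_le sum_nonpos)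
    with pd show False by (simp add: stationary_distribution_def)
  qed
  then obtain s where s: "0 < pd s" by blast
  obtain n where n: "0 < mpow M n s t"
    using irr unfolding irreducible_chain_def by blast
  have "pd s * mpow M n s t \<le> (\<Sum>u\<in>UNIV. pd u * mpow M n u t)"
    by (rule member_le_sum) (use pd mpow_nonneg[OF stoch] in \<open>auto simp: stationary_distribution_def\<close>)
  also have "\<dots> = pd t"
    by (rule stationary_distribution_mpow[OF pd])
  finally show ?thesis
    using mult_pos_pos[OF s n] by linarith
qed

lemma stationary_expectation_lipschitz:
  fixes M :: "'s::finite \<Rightarrow> 's \<Rightarrow> real" and g :: "'s \<Rightarrow> real"
  assumes stoch: "stochastic_matrix M" and irr: "irreducible_chain M"
    and pd: "stationary_distribution M pd"
  obtains C where "\<And>M' pd'. stationary_distribution M' pd' \<Longrightarrow>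
      \<bar>(\<Sum>s\<in>UNIV. pd' s * g s) - (\<Sum>s\<in>UNIV. pd s * g s)\<bar>
        \<le> C * (\<Sum>s\<in>UNIV. \<Sum>t\<in>UNIV. \<bar>M' s t - M s t\<bar>)"
proof -
  obtain V where V: "\<And>s. V s = g s - (\<Sum>t\<in>UNIV. pd t * g t) + (\<Sum>t\<in>UNIV. M s t * V t)"
    using poisson_equation_solvable[OF stoch irr pd] by blast
  define C where "C = (\<Sum>t\<in>UNIV. \<bar>V t\<bar>)"
  have V_le: "\<bar>V t\<bar> \<le> C" for t
    unfolding C_def by (rule member_le_sum) auto
  show ?thesis
  proof (rule that)
    fix M' :: "'s \<Rightarrow> 's \<Rightarrow> real" and pd' assume pd': "stationary_distribution M' pd'"
    define D where "D s = (\<Sum>t\<in>UNIV. (M' s t - M s t) * V t)" for s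
    have "\<bar>(\<Sum>s\<in>UNIV. pd' s * g s) - (\<Sum>s\<in>UNIV. pd s * g s)\<bar> = \<bar>\<Sum>s\<in>UNIV. pd' s * D s\<bar>"
      unfolding D_def stationary_expectation_difference[OF pd' V] ..
    also have "\<dots> \<le> (\<Sum>s\<in>UNIV. \<bar>D s\<bar>)"
      using pd' by (intro abs_sum_prob_mult_le) (auto simp: stationary_distribution_def)
    also have "\<dots> \<le> (\<Sum>s\<in>UNIV. \<Sum>t\<in>UNIV. \<bar>M' s t - M s t\<bar> * C)"
    proof (rule sum_mono)
      fix s
      have "\<bar>D s\<bar> \<le> (\<Sum>t\<in>UNIV. \<bar>(M' s t - M s t) * V t\<bar>)"
        unfolding D_def by (rule sum_abs)
      also have "\<dots> \<le> (\<Sum>t\<in>UNIV. \<bar>M' s t - M s t\<bar> * C)"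
        by (rule sum_mono) (simp add: abs_mult V_le mult_left_mono)
      finally show "\<bar>D s\<bar> \<le> (\<Sum>t\<in>UNIV. \<bar>M' s t - M s t\<bar> * C)" .
    qed
    finally show "\<bar>(\<Sum>s\<in>UNIV. pd' s * g s) - (\<Sum>s\<in>UNIV. pd s * g s)\<bar>
        \<le> C * (\<Sum>s\<in>UNIV. \<Sum>t\<in>UNIV. \<bar>M' s t - M s t\<bar>)"
      by (simp add: sum_distrib_left sum_distrib_right mult.commute)
  qed
qed

section \<open>Joint policies\<close>

lemma finite_jointA: "valid_game A P \<Longrightarrow> finite (jointA A)"
  unfolding valid_game_def jointA_def by (auto intro!: finite_PiE)

lemma jprob_nonneg: "is_joint_policy A mu \<Longrightarrow> 0 \<le> jprob mu s b"
  unfolding jprob_def is_joint_policy_def is_policy_def by (auto intro!: prod_nonneg)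

lemma sum_jprob_eq_1:
  assumes "valid_game A P" "is_joint_policy A mu"
  shows "(\<Sum>b\<in>jointA A. jprob mu s b) = 1"
proof -
  have "(\<Sum>b\<in>jointA A. jprob mu s b) = (\<Prod>i\<in>UNIV. \<Sum>a\<in>A i. mu i s a)"
    unfolding jointA_def jprob_def
    by (rule prod_sum_PiE[symmetric]) (use assms in \<open>auto simp: valid_game_def\<close>)
  also have "\<dots> = 1"
    using assms(2) by (simp add: is_joint_policy_def is_policy_def)
  finally show ?thesis .
qed

lemma sum_jprob_transition:
  "(\<Sum>b\<in>jointA A. jprob mu s b * (\<Sum>t\<in>UNIV. P s b t * W t)) = (\<Sum>t\<in>UNIV. Pmu A P mu s t * W t)"
  unfolding Pmu_def
  by (simp add: sum_distrib_left sum_distrib_right mult.assoc) (rule sum.swap)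

lemma sum_jprob_one_step:
  assumes "valid_game A P" "is_joint_policy A mu"
  shows "(\<Sum>b\<in>jointA A. jprob mu s b * (g b - c + (\<Sum>t\<in>UNIV. P s b t * W t) - W s))
       = (\<Sum>b\<in>jointA A. jprob mu s b * g b) - c + (\<Sum>t\<in>UNIV. Pmu A P mu s t * W t) - W s"
proof -
  have "(\<Sum>b\<in>jointA A. jprob mu s b * (g b - c + (\<Sum>t\<in>UNIV. P s b t * W t) - W s))
     = (\<Sum>b\<in>jointA A. jprob mu s b * g b) - (\<Sum>b\<in>jointA A. jprob mu s b) * c
       + (\<Sum>b\<in>jointA A. jprob mu s b * (\<Sum>t\<in>UNIV. P s b t * W t)) - (\<Sum>b\<in>jointA A. jprob mu s b) * W s"
    by (simp add: right_diff_distrib distrib_left sum.distrib sum_subtractf sum_distrib_right)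
  then show ?thesis
    by (simp add: sum_jprob_eq_1[OF assms] sum_jprob_transition)
qed

lemma stochastic_matrix_Pmu:
  assumes game: "valid_game A P" and mu: "is_joint_policy A mu"
  shows "stochastic_matrix (Pmu A P mu)"
  unfolding stochastic_matrix_def
proof (intro conjI allI)
  show "0 \<le> Pmu A P mu s t" for s t
    unfolding Pmu_def using game jprob_nonneg[OF mu] by (auto simp: valid_game_def intro!: sum_nonneg)
  show "(\<Sum>t\<in>UNIV. Pmu A P mu s t) = 1" for s
    using sum_jprob_transition[where W = "\<lambda>_. 1" and A = A and P = P and mu = mu and s = s] game
    by (simp add: valid_game_def sum_jprob_eq_1[OF game mu] cong: sum.cong)
qed

lemma jprob_fun_upd: "jprob (mu(i := q)) s b = q s (b i) * (\<Prod>j\<in>UNIV - {i}. mu j s (b j))"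
  unfolding jprob_def by (subst prod.remove[of UNIV i]) (auto intro!: prod.cong)

lemma sum_jprob_fun_upd:
  assumes "valid_game A P"
  shows "(\<Sum>b\<in>jointA A. jprob (mu(i := q)) s b * X b)
       = (\<Sum>a\<in>A i. q s a * (\<Sum>b\<in>{b\<in>jointA A. b i = a}. (\<Prod>j\<in>UNIV - {i}. mu j s (b j)) * X b))"
proof -
  have "(\<Sum>b\<in>jointA A. jprob (mu(i := q)) s b * X b)
      = (\<Sum>a\<in>A i. \<Sum>b\<in>{b\<in>jointA A. b i = a}. jprob (mu(i := q)) s b * X b)"
    by (rule sum.group[symmetric])
      (use assms finite_jointA[OF assms] in \<open>auto simp: valid_game_def jointA_def\<close>)
  then show ?thesis
    by (auto simp: sum_distrib_left jprob_fun_upd mult.assoc intro!: sum.cong)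
qed

lemma jprob_mix_pol:
  "jprob (mu(i := mix_pol \<delta> (mu i) p)) s b = (1 - \<delta>) * jprob mu s b + \<delta> * jprob (mu(i := p)) s b"
  using jprob_fun_upd[of mu i "mu i"] by (simp add: jprob_fun_upd mix_pol_def algebra_simps)

lemma sum_jprob_mix_pol:
  "(\<Sum>b\<in>jointA A. jprob (mu(i := mix_pol \<delta> (mu i) p)) s b * Y b)
   = (1 - \<delta>) * (\<Sum>b\<in>jointA A. jprob mu s b * Y b) + \<delta> * (\<Sum>b\<in>jointA A. jprob (mu(i := p)) s b * Y b)"
  by (simp add: jprob_mix_pol distrib_right sum.distrib sum_distrib_left mult.assoc)

lemma Pmu_mix_pol:
  "Pmu A P (mu(i := mix_pol \<delta> (mu i) p)) s t = (1 - \<delta>) * Pmu A P mu s t + \<delta> * Pmu A P (mu(i := p)) s t"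
  unfolding Pmu_def by (rule sum_jprob_mix_pol)

lemma is_policy_mix_pol:
  assumes "is_policy A i p" "is_policy A i q" "0 \<le> \<delta>" "\<delta> \<le> 1"
  shows "is_policy A i (mix_pol \<delta> p q)"
  using assms unfolding is_policy_def mix_pol_def
  by (auto simp: sum.distrib sum_distrib_left[symmetric])

lemma is_joint_policy_mix_pol:
  assumes "is_joint_policy A mu" "is_policy A i p" "0 \<le> \<delta>" "\<delta> \<le> 1"
  shows "is_joint_policy A (mu(i := mix_pol \<delta> (mu i) p))"
  using assms is_policy_mix_pol[of A i "mu i" p \<delta>] unfolding is_joint_policy_def by auto

lemma mix_pol_0: "mu(i := mix_pol 0 (mu i) p) = mu"
  by (simp add: mix_pol_def)

lemma is_joint_policy_det_joint:
  "valid_game A P \<Longrightarrow> (\<And>i s. e i s \<in> A i) \<Longrightarrow> is_joint_policy A (det_joint e)"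
  unfolding is_joint_policy_def is_policy_def det_joint_def valid_game_def
  by (auto simp: sum.delta')

lemma det_joint_fun_upd: "det_joint (e(i := c)) = (det_joint e)(i := (\<lambda>s a. if a = c s then 1 else 0))"
  unfolding det_joint_def by (auto simp: fun_eq_iff)

lemma sum_det_policy: "x \<in> S \<Longrightarrow> finite S \<Longrightarrow> (\<Sum>a\<in>S. (if a = x then 1 else 0) * X a) = (X x :: real)"
  by (simp add: if_distrib[of "\<lambda>y. y * X _"] sum.delta' cong: if_cong)

section \<open>The mean-variance objective\<close>

locale mv_team_game =
  fixes A :: "'i::finite \<Rightarrow> 'a set" and P :: "'s::finite \<Rightarrow> ('i \<Rightarrow> 'a) \<Rightarrow> 's \<Rightarrow> real"
    and r :: "'s \<Rightarrow> ('i \<Rightarrow> 'a) \<Rightarrow> real" and \<beta> :: real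
  assumes game: "valid_game A P"
    and ergodic: "\<And>mu. is_joint_policy A mu \<Longrightarrow> ergodic_chain (Pmu A P mu)"
    and beta_nonneg: "0 \<le> \<beta>"
begin

abbreviation sd :: "('i \<Rightarrow> 's \<Rightarrow> 'a \<Rightarrow> real) \<Rightarrow> 's \<Rightarrow> real" where
  "sd mu \<equiv> stat_dist (Pmu A P mu)"

abbreviation J :: "('i \<Rightarrow> 's \<Rightarrow> 'a \<Rightarrow> real) \<Rightarrow> real" where
  "J mu \<equiv> Jmv A P r \<beta> mu"

lemma irreducible_Pmu: "is_joint_policy A mu \<Longrightarrow> irreducible_chain (Pmu A P mu)"
  using ergodic by (simp add: ergodic_chain_def)

lemma stationary_distribution_sd:
  assumes mu: "is_joint_policy A mu"
  shows "stationary_distribution (Pmu A P mu) (sd mu)"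
proof -
  obtain pd where pd: "stationary_distribution (Pmu A P mu) pd"
    using stationary_distribution_exists[OF stochastic_matrix_Pmu[OF game mu]] by blast
  moreover have "sd mu = pd"
    by (rule stat_dist_eqI[OF stochastic_matrix_Pmu[OF game mu] irreducible_Pmu[OF mu] pd])
  ultimately show ?thesis by simp
qed

lemma sd_pos: "is_joint_policy A mu \<Longrightarrow> 0 < sd mu s"
  by (rule stationary_distribution_pos[OF stochastic_matrix_Pmu[OF game] irreducible_Pmu
        stationary_distribution_sd])

lemma sum_sd: "is_joint_policy A mu \<Longrightarrow> (\<Sum>s\<in>UNIV. sd mu s) = 1"
  using stationary_distribution_sd by (simp add: stationary_distribution_def)

definition steady_expect :: "('i \<Rightarrow> 's \<Rightarrow> 'a \<Rightarrow> real) \<Rightarrow> ('s \<Rightarrow> ('i \<Rightarrow> 'a) \<Rightarrow> real) \<Rightarrow> real" where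
  "steady_expect mu Y = (\<Sum>s\<in>UNIV. sd mu s * (\<Sum>b\<in>jointA A. jprob mu s b * Y s b))"

lemma steady_expect_add: "steady_expect mu (\<lambda>s b. X s b + Y s b) = steady_expect mu X + steady_expect mu Y"
  unfolding steady_expect_def by (simp add: distrib_left sum.distrib)

lemma steady_expect_diff: "steady_expect mu (\<lambda>s b. X s b - Y s b) = steady_expect mu X - steady_expect mu Y"
  unfolding steady_expect_def by (simp add: right_diff_distrib sum_subtractf)

lemma steady_expect_cmult: "steady_expect mu (\<lambda>s b. c * X s b) = c * steady_expect mu X"
  unfolding steady_expect_def by (simp add: sum_distrib_left mult.left_commute)

lemma steady_expect_const: "is_joint_policy A mu \<Longrightarrow> steady_expect mu (\<lambda>s b. c) = c"
  unfolding steady_expect_def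
  by (simp add: sum_jprob_eq_1[OF game] sum_sd flip: sum_distrib_right)

lemma steady_expect_transition_diff:
  assumes mu: "is_joint_policy A mu"
  shows "steady_expect mu (\<lambda>s b. (\<Sum>t\<in>UNIV. P s b t * W t) - W s) = 0"
proof -
  have "(\<Sum>b\<in>jointA A. jprob mu s b * ((\<Sum>t\<in>UNIV. P s b t * W t) - W s))
        = (\<Sum>t\<in>UNIV. Pmu A P mu s t * W t) - W s" for s
    using sum_jprob_one_step[OF game mu, of s "\<lambda>b. 0" 0 W] by simp
  then show ?thesis
    using stationary_distribution_sum_transition[OF stationary_distribution_sd[OF mu], of W]
    by (simp add: steady_expect_def right_diff_distrib sum_subtractf)
qed

lemma eta_eq_steady_expect: "eta A P r mu = steady_expect mu r"
  unfolding eta_def steady_expect_def ..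

lemma zeta_eq_steady_expect: "zeta A P r mu = steady_expect mu (\<lambda>s b. (r s b - eta A P r mu)\<^sup>2)"
  unfolding zeta_def steady_expect_def ..

lemma Jmv_eq_steady_expect: "J mu = steady_expect mu (fmv A P r \<beta> mu)"
proof -
  have "steady_expect mu (fmv A P r \<beta> mu)
      = steady_expect mu (\<lambda>s b. r s b - \<beta> * (r s b - eta A P r mu)\<^sup>2)"
    by (simp add: fmv_def[abs_def])
  also have "\<dots> = eta A P r mu - \<beta> * zeta A P r mu"
    by (simp only: steady_expect_diff steady_expect_cmult eta_eq_steady_expect zeta_eq_steady_expect)
  finally show ?thesis by (simp add: Jmv_def)
qed

lemma Vf_poisson:
  assumes mu: "is_joint_policy A mu"
  shows "Vf A P r \<beta> mu s = fbar A P r \<beta> mu s - J mu + (\<Sum>t\<in>UNIV. Pmu A P mu s t * Vf A P r \<beta> mu t)"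
proof -
  have J_eq: "J mu = (\<Sum>t\<in>UNIV. sd mu t * fbar A P r \<beta> mu t)"
    unfolding Jmv_eq_steady_expect steady_expect_def fbar_def ..
  obtain V where "\<And>s. V s = fbar A P r \<beta> mu s - J mu + (\<Sum>t\<in>UNIV. Pmu A P mu s t * V t)"
    using poisson_equation_solvable[OF stochastic_matrix_Pmu[OF game mu] irreducible_Pmu[OF mu]
        stationary_distribution_sd[OF mu], of "fbar A P r \<beta> mu"]
    unfolding J_eq by blast
  then have "\<exists>V. \<forall>s. V s = fbar A P r \<beta> mu s - J mu + (\<Sum>t\<in>UNIV. Pmu A P mu s t * V t)"
    by blast
  from someI_ex[OF this] show ?thesis
    unfolding Vf_def by blast
qed

lemma sum_jprob_Af_eq_0:
  assumes mu: "is_joint_policy A mu"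
  shows "(\<Sum>b\<in>jointA A. jprob mu s b * Af A P r \<beta> mu s b) = 0"
  using sum_jprob_one_step[OF game mu, of s "fmv A P r \<beta> mu s" "J mu" "Vf A P r \<beta> mu"]
    Vf_poisson[OF mu, of s]
  by (simp add: Af_def Qf_def fbar_def)

text \<open>The quadratic term appears because \<open>f\<^sup>\<mu>\<close> centres the reward at \<open>\<eta>\<^sup>\<mu>\<close>
  rather than at \<open>\<eta>\<^sup>\<mu>'\<close>.\<close>

lemma Jmv_performance_difference:
  assumes mu: "is_joint_policy A mu" and mu': "is_joint_policy A mu'"
  shows "J mu' = J mu + steady_expect mu' (Af A P r \<beta> mu) + \<beta> * (eta A P r mu' - eta A P r mu)\<^sup>2"
proof -
  define \<eta> \<eta>' where "\<eta> = eta A P r mu" and "\<eta>' = eta A P r mu'"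
  define V where "V = Vf A P r \<beta> mu"
  have "steady_expect mu' (Af A P r \<beta> mu)
      = steady_expect mu' (\<lambda>s b. (fmv A P r \<beta> mu s b - J mu) + ((\<Sum>t\<in>UNIV. P s b t * V t) - V s))"
    by (simp add: Af_def[abs_def] Qf_def V_def algebra_simps)
  also have "\<dots> = steady_expect mu' (\<lambda>s b. fmv A P r \<beta> mu s b - J mu)
      + steady_expect mu' (\<lambda>s b. (\<Sum>t\<in>UNIV. P s b t * V t) - V s)"
    by (rule steady_expect_add)
  also have "\<dots> = steady_expect mu' (fmv A P r \<beta> mu) - J mu"
    unfolding steady_expect_transition_diff[OF mu']
    by (simp add: steady_expect_diff steady_expect_const[OF mu'])
  finally have adv: "steady_expect mu' (Af A P r \<beta> mu) = steady_expect mu' (fmv A P r \<beta> mu) - J mu" .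
  \<comment> \<open>recentre \<open>f\<^sup>\<mu>\<close> at \<open>\<eta>'\<close>; the linear term then has \<open>\<mu>'\<close>-mean zero\<close>
  have "fmv A P r \<beta> mu = (\<lambda>s b. r s b - \<beta> * (r s b - \<eta>')\<^sup>2 - (2 * \<beta> * (\<eta>' - \<eta>)) * (r s b - \<eta>')
      - \<beta> * (\<eta>' - \<eta>)\<^sup>2)"
    by (simp add: fun_eq_iff fmv_def \<eta>_def power2_eq_square algebra_simps)
  then have "steady_expect mu' (fmv A P r \<beta> mu)
      = \<eta>' - \<beta> * zeta A P r mu' - (2 * \<beta> * (\<eta>' - \<eta>)) * (\<eta>' - \<eta>') - \<beta> * (\<eta>' - \<eta>)\<^sup>2"
    by (simp only: steady_expect_diff steady_expect_cmult steady_expect_const[OF mu']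
        eta_eq_steady_expect[symmetric] \<eta>'_def zeta_eq_steady_expect[symmetric])
  then show ?thesis
    using adv by (simp add: Jmv_def \<eta>_def \<eta>'_def)
qed

lemma sum_jprob_fun_upd_Af:
  "(\<Sum>b\<in>jointA A. jprob (mu(i := q)) s b * Af A P r \<beta> mu s b)
     = (\<Sum>a\<in>A i. q s a * exp_adv A P r \<beta> mu i s a)"
  by (simp add: sum_jprob_fun_upd[OF game] exp_adv_def)

lemma exp_adv_det_joint_self:
  assumes e: "\<And>j s. e j s \<in> A j"
  shows "exp_adv A P r \<beta> (det_joint e) i s (e i s) = 0"
proof -
  have "exp_adv A P r \<beta> (det_joint e) i s (e i s)
      = (\<Sum>a\<in>A i. det_joint e i s a * exp_adv A P r \<beta> (det_joint e) i s a)"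
    unfolding det_joint_def by (rule sum_det_policy[symmetric]) (use e game in \<open>auto simp: valid_game_def\<close>)
  also have "\<dots> = 0"
    using sum_jprob_Af_eq_0[OF is_joint_policy_det_joint[OF game e], where s = s]
      sum_jprob_fun_upd_Af[where mu = "det_joint e" and i = i and q = "det_joint e i" and s = s]
    by simp
  finally show ?thesis .
qed

lemma Jmv_det_joint_fun_upd:
  assumes e: "\<And>j s. e j s \<in> A j" and c: "\<And>s. c s \<in> A i"
  shows "J (det_joint (e(i := c))) = J (det_joint e)
      + (\<Sum>s\<in>UNIV. sd (det_joint (e(i := c))) s * exp_adv A P r \<beta> (det_joint e) i s (c s))
      + \<beta> * (eta A P r (det_joint (e(i := c))) - eta A P r (det_joint e))\<^sup>2"
proof -
  have e': "\<And>j s. (e(i := c)) j s \<in> A j"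
    using e c by auto
  have jp: "is_joint_policy A (det_joint e)" and jp': "is_joint_policy A (det_joint (e(i := c)))"
    using is_joint_policy_det_joint[OF game] e e' by blast+
  have "(\<Sum>b\<in>jointA A. jprob (det_joint (e(i := c))) s b * Af A P r \<beta> (det_joint e) s b)
      = exp_adv A P r \<beta> (det_joint e) i s (c s)" for s
    unfolding det_joint_fun_upd sum_jprob_fun_upd_Af
    by (rule sum_det_policy) (use c game in \<open>auto simp: valid_game_def\<close>)
  then have "steady_expect (det_joint (e(i := c))) (Af A P r \<beta> (det_joint e))
      = (\<Sum>s\<in>UNIV. sd (det_joint (e(i := c))) s * exp_adv A P r \<beta> (det_joint e) i s (c s))"
    by (simp add: steady_expect_def)
  then show ?thesis
    using Jmv_performance_difference[OF jp jp'] by simp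
qed

lemma Jmv_det_joint_fun_upd_mono:
  assumes e: "\<And>j s. e j s \<in> A j" and c: "\<And>s. c s \<in> A i"
    and gain: "\<And>s. 0 \<le> exp_adv A P r \<beta> (det_joint e) i s (c s)"
  shows "J (det_joint e) \<le> J (det_joint (e(i := c)))"
    and "0 < exp_adv A P r \<beta> (det_joint e) i s0 (c s0) \<Longrightarrow> J (det_joint e) < J (det_joint (e(i := c)))"
proof -
  have e': "\<And>j s. (e(i := c)) j s \<in> A j"
    using e c by auto
  have jp: "is_joint_policy A (det_joint e)" and jp': "is_joint_policy A (det_joint (e(i := c)))"
    using is_joint_policy_det_joint[OF game] e e' by blast+
  define G where "G s = sd (det_joint (e(i := c))) s * exp_adv A P r \<beta> (det_joint e) i s (c s)" for s
  have G_nonneg: "0 \<le> G s" for s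
    unfolding G_def using sd_pos[OF jp'] gain by (simp add: less_imp_le)
  have J_eq: "J (det_joint (e(i := c))) = J (det_joint e) + sum G UNIV
      + \<beta> * (eta A P r (det_joint (e(i := c))) - eta A P r (det_joint e))\<^sup>2"
    unfolding G_def by (rule Jmv_det_joint_fun_upd[OF e c])
  have "0 \<le> sum G UNIV"
    using G_nonneg by (simp add: sum_nonneg)
  then show "J (det_joint e) \<le> J (det_joint (e(i := c)))"
    using J_eq beta_nonneg by simp
  assume "0 < exp_adv A P r \<beta> (det_joint e) i s0 (c s0)"
  then have "0 < G s0"
    unfolding G_def using sd_pos[OF jp'] by simp
  then have "0 < sum G UNIV"
    using G_nonneg by (intro sum_pos2[of UNIV s0]) auto
  then show "J (det_joint e) < J (det_joint (e(i := c)))"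
    using J_eq beta_nonneg by (simp add: add_pos_nonneg)
qed

lemma sd_mix_pol_lipschitz:
  assumes mu: "is_joint_policy A mu" and p: "is_policy A i p"
  obtains C where "\<And>\<delta>. 0 \<le> \<delta> \<Longrightarrow> \<delta> \<le> 1 \<Longrightarrow>
    \<bar>(\<Sum>s\<in>UNIV. sd (mu(i := mix_pol \<delta> (mu i) p)) s * g s) - (\<Sum>s\<in>UNIV. sd mu s * g s)\<bar> \<le> C * \<delta>"
proof -
  obtain C0 where C0: "\<And>M' pd'. stationary_distribution M' pd' \<Longrightarrow>
      \<bar>(\<Sum>s\<in>UNIV. pd' s * g s) - (\<Sum>s\<in>UNIV. sd mu s * g s)\<bar>
        \<le> C0 * (\<Sum>s\<in>UNIV. \<Sum>t\<in>UNIV. \<bar>M' s t - Pmu A P mu s t\<bar>)"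
    using stationary_expectation_lipschitz[OF stochastic_matrix_Pmu[OF game mu] irreducible_Pmu[OF mu]
        stationary_distribution_sd[OF mu], where g = g] by blast
  define K where "K = (\<Sum>s\<in>UNIV. \<Sum>t\<in>UNIV. \<bar>Pmu A P (mu(i := p)) s t - Pmu A P mu s t\<bar>)"
  show ?thesis
  proof (rule that[of "C0 * K"])
    fix \<delta> :: real assume \<delta>: "0 \<le> \<delta>" "\<delta> \<le> 1"
    let ?md = "mu(i := mix_pol \<delta> (mu i) p)"
    have "Pmu A P ?md s t - Pmu A P mu s t = \<delta> * (Pmu A P (mu(i := p)) s t - Pmu A P mu s t)" for s t
      by (simp add: Pmu_mix_pol algebra_simps)
    then have "(\<Sum>s\<in>UNIV. \<Sum>t\<in>UNIV. \<bar>Pmu A P ?md s t - Pmu A P mu s t\<bar>) = \<delta> * K"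
      using \<delta> by (simp add: K_def abs_mult sum_distrib_left)
    then show "\<bar>(\<Sum>s\<in>UNIV. sd ?md s * g s) - (\<Sum>s\<in>UNIV. sd mu s * g s)\<bar> \<le> C0 * K * \<delta>"
      using C0[OF stationary_distribution_sd[OF is_joint_policy_mix_pol[OF mu p \<delta>]]]
      by (simp add: ac_simps)
  qed
qed

lemma steady_expect_mix_pol:
  "steady_expect (mu(i := mix_pol \<delta> (mu i) p)) Y
     = (1 - \<delta>) * (\<Sum>s\<in>UNIV. sd (mu(i := mix_pol \<delta> (mu i) p)) s * (\<Sum>b\<in>jointA A. jprob mu s b * Y s b))
       + \<delta> * (\<Sum>s\<in>UNIV. sd (mu(i := mix_pol \<delta> (mu i) p)) s * (\<Sum>b\<in>jointA A. jprob (mu(i := p)) s b * Y s b))"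
  unfolding steady_expect_def sum_jprob_mix_pol
  by (simp add: distrib_left sum.distrib sum_distrib_left mult.left_commute)

lemma steady_expect_mix_pol_lipschitz:
  assumes mu: "is_joint_policy A mu" and p: "is_policy A i p"
  obtains C where "\<And>\<delta>. 0 \<le> \<delta> \<Longrightarrow> \<delta> \<le> 1 \<Longrightarrow>
    \<bar>steady_expect (mu(i := mix_pol \<delta> (mu i) p)) Y - steady_expect mu Y\<bar> \<le> C * \<delta>"
proof -
  define y yp where "y s = (\<Sum>b\<in>jointA A. jprob mu s b * Y s b)"
    and "yp s = (\<Sum>b\<in>jointA A. jprob (mu(i := p)) s b * Y s b)" for s
  obtain C1 where C1: "\<And>\<delta>. 0 \<le> \<delta> \<Longrightarrow> \<delta> \<le> 1 \<Longrightarrow>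
      \<bar>(\<Sum>s\<in>UNIV. sd (mu(i := mix_pol \<delta> (mu i) p)) s * y s) - (\<Sum>s\<in>UNIV. sd mu s * y s)\<bar> \<le> C1 * \<delta>"
    using sd_mix_pol_lipschitz[OF mu p] by blast
  show ?thesis
  proof (rule that[of "C1 + (\<Sum>s\<in>UNIV. \<bar>yp s - y s\<bar>)"])
    fix \<delta> :: real assume \<delta>: "0 \<le> \<delta>" "\<delta> \<le> 1"
    define q where "q = sd (mu(i := mix_pol \<delta> (mu i) p))"
    have q: "stationary_distribution (Pmu A P (mu(i := mix_pol \<delta> (mu i) p))) q"
      unfolding q_def by (rule stationary_distribution_sd[OF is_joint_policy_mix_pol[OF mu p \<delta>]])
    have "steady_expect (mu(i := mix_pol \<delta> (mu i) p)) Y - steady_expect mu Y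
        = ((\<Sum>s\<in>UNIV. q s * y s) - (\<Sum>s\<in>UNIV. sd mu s * y s)) + \<delta> * (\<Sum>s\<in>UNIV. q s * (yp s - y s))"
      unfolding steady_expect_mix_pol
      by (simp add: steady_expect_def q_def y_def yp_def algebra_simps sum_subtractf)
    also have "\<bar>\<dots>\<bar> \<le> C1 * \<delta> + \<delta> * (\<Sum>s\<in>UNIV. \<bar>yp s - y s\<bar>)"
    proof (rule order.trans[OF abs_triangle_ineq add_mono])
      show "\<bar>(\<Sum>s\<in>UNIV. q s * y s) - (\<Sum>s\<in>UNIV. sd mu s * y s)\<bar> \<le> C1 * \<delta>"
        unfolding q_def by (rule C1[OF \<delta>])
      have "\<bar>\<Sum>s\<in>UNIV. q s * (yp s - y s)\<bar> \<le> (\<Sum>s\<in>UNIV. \<bar>yp s - y s\<bar>)"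
        using q by (intro abs_sum_prob_mult_le) (auto simp: stationary_distribution_def)
      then show "\<bar>\<delta> * (\<Sum>s\<in>UNIV. q s * (yp s - y s))\<bar> \<le> \<delta> * (\<Sum>s\<in>UNIV. \<bar>yp s - y s\<bar>)"
        using \<delta> by (simp add: abs_mult mult_left_mono)
    qed
    finally show "\<bar>steady_expect (mu(i := mix_pol \<delta> (mu i) p)) Y - steady_expect mu Y\<bar>
        \<le> (C1 + (\<Sum>s\<in>UNIV. \<bar>yp s - y s\<bar>)) * \<delta>"
      by (simp add: algebra_simps)
  qed
qed

lemma steady_expect_mix_pol_Af:
  assumes mu: "is_joint_policy A mu"
  shows "steady_expect (mu(i := mix_pol \<delta> (mu i) p)) (Af A P r \<beta> mu)
    = \<delta> * (\<Sum>s\<in>UNIV. sd (mu(i := mix_pol \<delta> (mu i) p)) s * (\<Sum>a\<in>A i. p s a * exp_adv A P r \<beta> mu i s a))"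
  unfolding steady_expect_mix_pol sum_jprob_Af_eq_0[OF mu] sum_jprob_fun_upd_Af by simp

lemma Jmv_mix_pol_has_derivative:
  assumes mu: "is_joint_policy A mu" and p: "is_policy A i p"
  shows "((\<lambda>\<delta>. J (mu(i := mix_pol \<delta> (mu i) p))) has_real_derivative
           (\<Sum>s\<in>UNIV. sd mu s * (\<Sum>a\<in>A i. p s a * exp_adv A P r \<beta> mu i s a))) (at 0 within {0..1})"
proof -
  define md where "md \<delta> = mu(i := mix_pol \<delta> (mu i) p)" for \<delta>
  define g where "g s = (\<Sum>a\<in>A i. p s a * exp_adv A P r \<beta> mu i s a)" for s
  define c where "c = (\<Sum>s\<in>UNIV. sd mu s * g s)"
  obtain Cg where Cg: "\<And>\<delta>. 0 \<le> \<delta> \<Longrightarrow> \<delta> \<le> 1 \<Longrightarrow> \<bar>(\<Sum>s\<in>UNIV. sd (md \<delta>) s * g s) - c\<bar> \<le> Cg * \<delta>"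
    using sd_mix_pol_lipschitz[OF mu p, of g] unfolding md_def c_def by blast
  obtain C\<eta> where C\<eta>: "\<And>\<delta>. 0 \<le> \<delta> \<Longrightarrow> \<delta> \<le> 1 \<Longrightarrow> \<bar>eta A P r (md \<delta>) - eta A P r mu\<bar> \<le> C\<eta> * \<delta>"
    using steady_expect_mix_pol_lipschitz[OF mu p, of r] unfolding md_def eta_eq_steady_expect by blast
  have "\<bar>J (md \<delta>) - J (md 0) - (\<delta> - 0) * c\<bar> \<le> (Cg + \<beta> * C\<eta>\<^sup>2) * (\<delta> - 0)\<^sup>2" if "\<delta> \<in> {0..1}" for \<delta>
  proof -
    have \<delta>: "0 \<le> \<delta>" "\<delta> \<le> 1"
      using that by auto
    define a e where "a = (\<Sum>s\<in>UNIV. sd (md \<delta>) s * g s) - c" and "e = eta A P r (md \<delta>) - eta A P r mu"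
    have "J (md \<delta>) - J (md 0) - \<delta> * c = \<delta> * a + \<beta> * e\<^sup>2"
      using Jmv_performance_difference[OF mu is_joint_policy_mix_pol[OF mu p \<delta>]]
      by (simp add: md_def mix_pol_0 a_def e_def g_def steady_expect_mix_pol_Af[OF mu] algebra_simps)
    also have "\<bar>\<dots>\<bar> \<le> \<delta> * (Cg * \<delta>) + \<beta> * (C\<eta> * \<delta>)\<^sup>2"
    proof (rule order.trans[OF abs_triangle_ineq add_mono])
      show "\<bar>\<delta> * a\<bar> \<le> \<delta> * (Cg * \<delta>)"
        using Cg[OF \<delta>] \<delta> by (simp add: a_def abs_mult mult_left_mono)
      have "e\<^sup>2 \<le> (C\<eta> * \<delta>)\<^sup>2"
        using C\<eta>[OF \<delta>] unfolding e_def by (metis abs_ge_zero power2_abs power_mono)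
      then show "\<bar>\<beta> * e\<^sup>2\<bar> \<le> \<beta> * (C\<eta> * \<delta>)\<^sup>2"
        using beta_nonneg by (simp add: mult_left_mono)
    qed
    also have "\<dots> = (Cg + \<beta> * C\<eta>\<^sup>2) * \<delta>\<^sup>2"
      by (simp add: power2_eq_square algebra_simps)
    finally show ?thesis by simp
  qed
  then have "((\<lambda>\<delta>. J (md \<delta>)) has_real_derivative c) (at 0 within {0..1})"
    by (rule has_real_derivative_quadratic_remainder[where f = "\<lambda>\<delta>. J (md \<delta>)"])
  then show ?thesis
    unfolding md_def c_def g_def .
qed

lemma first_order_stationary_det_joint:
  assumes e: "\<And>i s. e i s \<in> A i"
    and no_gain: "\<And>i s a. a \<in> A i \<Longrightarrow> exp_adv A P r \<beta> (det_joint e) i s a \<le> 0"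
  shows "first_order_stationary A P r \<beta> (det_joint e)"
  unfolding first_order_stationary_def
proof (intro allI impI exI conjI)
  fix i and p :: "'s \<Rightarrow> 'a \<Rightarrow> real" assume p: "is_policy A i p"
  have mu: "is_joint_policy A (det_joint e)"
    using game e by (rule is_joint_policy_det_joint)
  show "((\<lambda>\<delta>. J ((det_joint e)(i := mix_pol \<delta> (det_joint e i) p))) has_real_derivative
           (\<Sum>s\<in>UNIV. sd (det_joint e) s * (\<Sum>a\<in>A i. p s a * exp_adv A P r \<beta> (det_joint e) i s a)))
         (at 0 within {0..1})"
    by (rule Jmv_mix_pol_has_derivative[OF mu p])
  show "(\<Sum>s\<in>UNIV. sd (det_joint e) s * (\<Sum>a\<in>A i. p s a * exp_adv A P r \<beta> (det_joint e) i s a)) \<le> 0"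
    using p no_gain sd_pos[OF mu]
    by (intro sum_nonpos mult_nonneg_nonpos sum_nonpos mult_nonneg_nonpos)
      (auto simp: is_policy_def less_imp_le)
qed

end

section \<open>Runs of MV-MAPI\<close>

locale mv_mapi_run = mv_team_game A P r \<beta>
  for A :: "'i::finite \<Rightarrow> 'a set" and P :: "'s::finite \<Rightarrow> ('i \<Rightarrow> 'a) \<Rightarrow> 's \<Rightarrow> real" and r \<beta> +
  fixes d :: "nat \<Rightarrow> 'i \<Rightarrow> 's \<Rightarrow> 'a" and perm :: "nat \<Rightarrow> 'i list"
  assumes run: "mvmapi_run A P r \<beta> d perm"
begin

lemma distinct_perm: "distinct (perm k)" and set_perm: "set (perm k) = UNIV"
  using run unfolding mvmapi_run_def by blast+

lemma length_perm: "length (perm k) = CARD('i)"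
  using distinct_card[OF distinct_perm] by (simp add: set_perm)

lemma perm_index:
  obtains h where "h < length (perm k)" "perm k ! h = i"
  using set_perm[of k] by (metis UNIV_I in_set_conv_nth)

lemma run_update:
  assumes h: "h < length (perm k)" and i: "i = perm k ! h"
  defines "X \<equiv> exp_adv A P r \<beta> (det_joint (hat_pol d perm k h)) i"
  shows "d (Suc k) i s \<in> A i"
    and "a \<in> A i \<Longrightarrow> X s a \<le> X s (d (Suc k) i s)"
    and "(\<And>a. a \<in> A i \<Longrightarrow> X s a \<le> X s (d k i s)) \<Longrightarrow> d (Suc k) i s = d k i s"
  using run h unfolding mvmapi_run_def Let_def X_def i by blast+

lemma d_in_A: "d k i s \<in> A i"
proof (induction k arbitrary: i s)
  case 0
  then show ?case using run by (simp add: mvmapi_run_def)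
next
  case (Suc k)
  obtain h where "h < length (perm k)" "perm k ! h = i"
    by (rule perm_index)
  then show ?case
    using run_update(1) by blast
qed

lemma hat_pol_in_A: "hat_pol d perm k h i s \<in> A i"
  unfolding hat_pol_def by (simp add: d_in_A)

lemma hat_pol_0: "hat_pol d perm k 0 = d k"
  unfolding hat_pol_def by simp

lemma hat_pol_length: "hat_pol d perm k (length (perm k)) = d (Suc k)"
  unfolding hat_pol_def by (simp add: set_perm)

lemma hat_pol_Suc:
  "h < length (perm k) \<Longrightarrow>
     hat_pol d perm k (Suc h) = (hat_pol d perm k h)(perm k ! h := d (Suc k) (perm k ! h))"
  by (auto simp: hat_pol_def take_Suc_conv_app_nth fun_eq_iff)

lemma hat_pol_nth: "h < length (perm k) \<Longrightarrow> hat_pol d perm k h (perm k ! h) = d k (perm k ! h)"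
  unfolding hat_pol_def using distinct_nth_notin_set_take[OF distinct_perm] by simp

lemma hat_pol_fixed: "d (Suc k) = d k \<Longrightarrow> hat_pol d perm k h = d k"
  unfolding hat_pol_def by auto

lemma Jmv_hat_pol_Suc_mono:
  assumes h: "h < length (perm k)"
  shows "J (det_joint (hat_pol d perm k h)) \<le> J (det_joint (hat_pol d perm k (Suc h)))"
    and "d (Suc k) (perm k ! h) \<noteq> d k (perm k ! h) \<Longrightarrow>
      J (det_joint (hat_pol d perm k h)) < J (det_joint (hat_pol d perm k (Suc h)))"
proof -
  define i e c where "i = perm k ! h" and "e = hat_pol d perm k h" and "c = d (Suc k) i"
  define X where "X s = exp_adv A P r \<beta> (det_joint e) i s" for s
  have e_in_A: "\<And>j s. e j s \<in> A j" and c_in_A: "\<And>s. c s \<in> A i"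
    unfolding e_def c_def by (simp_all add: hat_pol_in_A d_in_A)
  have current: "X s (d k i s) = 0" for s
    using exp_adv_det_joint_self[where e = e and i = i and s = s, OF e_in_A] hat_pol_nth[OF h]
    by (simp add: X_def e_def i_def)
  have gain: "0 \<le> X s (c s)" for s
    using run_update(2)[where s = s, OF h i_def d_in_A[of k i s]] current
    unfolding X_def e_def c_def by simp
  have next_eq: "hat_pol d perm k (Suc h) = e(i := c)"
    unfolding e_def i_def c_def by (rule hat_pol_Suc[OF h])
  show "J (det_joint (hat_pol d perm k h)) \<le> J (det_joint (hat_pol d perm k (Suc h)))"
    unfolding next_eq using Jmv_det_joint_fun_upd_mono(1)[OF e_in_A c_in_A gain[unfolded X_def]]
    by (simp add: e_def)
  assume "d (Suc k) (perm k ! h) \<noteq> d k (perm k ! h)"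
  then obtain s where "c s \<noteq> d k i s"
    unfolding c_def i_def by auto
  \<comment> \<open>the tie-breaking rule keeps the current action whenever it is still a maximiser\<close>
  then have "0 < X s (c s)"
    using run_update(2,3)[where s = s, OF h i_def] current gain[of s] unfolding X_def e_def c_def
    by (metis not_le order.trans)
  then show "J (det_joint (hat_pol d perm k h)) < J (det_joint (hat_pol d perm k (Suc h)))"
    unfolding next_eq using Jmv_det_joint_fun_upd_mono(2)[OF e_in_A c_in_A gain[unfolded X_def]]
    by (simp add: X_def e_def)
qed

lemma Jmv_hat_pol_mono:
  assumes "h \<le> h'" "h' \<le> length (perm k)"
  shows "J (det_joint (hat_pol d perm k h)) \<le> J (det_joint (hat_pol d perm k h'))"
  using assms
proof (induction h' rule: dec_induct)
  case base
  then show ?case by simp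
next
  case (step h')
  then show ?case
    using Jmv_hat_pol_Suc_mono(1)[of h' k] by simp
qed

lemma Jmv_iterate_mono: "J (det_joint (d k)) \<le> J (det_joint (d (Suc k)))"
  using Jmv_hat_pol_mono[of 0 "length (perm k)" k] by (simp add: hat_pol_0 hat_pol_length)

lemma Jmv_iterate_strict_mono:
  assumes "d (Suc k) \<noteq> d k"
  shows "J (det_joint (d k)) < J (det_joint (d (Suc k)))"
proof -
  obtain i s where "d (Suc k) i s \<noteq> d k i s"
    using assms by (meson ext)
  moreover obtain h where h: "h < length (perm k)" "perm k ! h = i"
    by (rule perm_index)
  ultimately have "d (Suc k) (perm k ! h) \<noteq> d k (perm k ! h)"
    by metis
  then have "J (det_joint (hat_pol d perm k h)) < J (det_joint (hat_pol d perm k (Suc h)))"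
    by (rule Jmv_hat_pol_Suc_mono(2)[OF h(1)])
  moreover have "J (det_joint (d k)) \<le> J (det_joint (hat_pol d perm k h))"
    using Jmv_hat_pol_mono[of 0 h k] h by (simp add: hat_pol_0)
  moreover have "J (det_joint (hat_pol d perm k (Suc h))) \<le> J (det_joint (d (Suc k)))"
    using Jmv_hat_pol_mono[of "Suc h" "length (perm k)" k] h by (simp add: hat_pol_length)
  ultimately show ?thesis by linarith
qed

lemma fixed_point_no_gain:
  assumes fixed: "d (Suc k) = d k" and a: "a \<in> A i"
  shows "exp_adv A P r \<beta> (det_joint (d k)) i s a \<le> 0"
proof -
  obtain h where h: "h < length (perm k)" "perm k ! h = i"
    by (rule perm_index)
  have "exp_adv A P r \<beta> (det_joint (d k)) i s a \<le> exp_adv A P r \<beta> (det_joint (d k)) i s (d k i s)"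
    using run_update(2)[where s = s, OF h(1) h(2)[symmetric] a] fixed by (simp add: hat_pol_fixed)
  also have "\<dots> = 0"
    by (rule exp_adv_det_joint_self) (rule d_in_A)
  finally show ?thesis .
qed

lemma fixed_point_stable:
  assumes fixed: "d (Suc k) = d k"
  shows "d (Suc (Suc k)) = d (Suc k)"
proof -
  have "hat_pol d perm (Suc k) h = d (Suc k)" if "h \<le> length (perm (Suc k))" for h
    using that
  proof (induction h)
    case 0
    then show ?case by (simp add: hat_pol_0)
  next
    case (Suc h)
    then have h: "h < length (perm (Suc k))" and IH: "hat_pol d perm (Suc k) h = d (Suc k)"
      by simp_all
    define i where "i = perm (Suc k) ! h"
    have "d (Suc (Suc k)) i s = d (Suc k) i s" for s
      using run_update(3)[OF h i_def] fixed_point_no_gain[OF fixed]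
        exp_adv_det_joint_self[where e = "d (Suc k)" and i = i and s = s, OF d_in_A]
      by (simp add: IH fixed)
    then show ?case
      using hat_pol_Suc[OF h] by (simp add: IH i_def[symmetric] fun_upd_idem_iff fun_eq_iff)
  qed
  from this[of "length (perm (Suc k))"] show ?thesis
    by (simp add: hat_pol_length)
qed

lemma eventually_const: "\<exists>K. \<forall>k\<ge>K. d k = d K"
proof (rule eventually_const_of_strict_improvement)
  have "range d \<subseteq> (\<Pi>\<^sub>E i\<in>UNIV. \<Pi>\<^sub>E s\<in>UNIV. A i)"
    by (auto simp: d_in_A)
  moreover have "finite (\<Pi>\<^sub>E i\<in>UNIV. \<Pi>\<^sub>E s\<in>(UNIV :: 's set). A i)"
    using game by (auto simp: valid_game_def intro!: finite_PiE)
  ultimately show "finite (range d)"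
    by (rule finite_subset)
  show "J (det_joint (d k)) < J (det_joint (d (Suc k)))" if "d (Suc k) \<noteq> d k" for k
    using that by (rule Jmv_iterate_strict_mono)
qed (rule fixed_point_stable)

lemma fixed_point_first_order_stationary:
  "d (Suc K) = d K \<Longrightarrow> first_order_stationary A P r \<beta> (det_joint (d K))"
  by (rule first_order_stationary_det_joint[OF d_in_A fixed_point_no_gain])

end

theorem theorem2:
  fixes A :: "'i::finite \<Rightarrow> 'a set"
    and P :: "'s::finite \<Rightarrow> ('i \<Rightarrow> 'a) \<Rightarrow> 's \<Rightarrow> real"
    and r :: "'s \<Rightarrow> ('i \<Rightarrow> 'a) \<Rightarrow> real"
    and \<beta> :: real
    and d :: "nat \<Rightarrow> 'i \<Rightarrow> 's \<Rightarrow> 'a"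
    and perm :: "nat \<Rightarrow> 'i list"
  assumes game: "valid_game A P"
    and ergodic: "\<And>mu. is_joint_policy A mu \<Longrightarrow> ergodic_chain (Pmu A P mu)"
    and beta: "0 \<le> \<beta>"
    and run: "mvmapi_run A P r \<beta> d perm"
  shows "(\<forall>k h. h < CARD('i) \<longrightarrow>
            Jmv A P r \<beta> (det_joint (hat_pol d perm k h))
              \<le> Jmv A P r \<beta> (det_joint (hat_pol d perm k (Suc h))))
       \<and> (\<forall>k. Jmv A P r \<beta> (det_joint (d k)) \<le> Jmv A P r \<beta> (det_joint (d (Suc k))))
       \<and> (\<exists>K. \<forall>k\<ge>K. d k = d K)
       \<and> (\<forall>K. d (Suc K) = d K \<longrightarrow> first_order_stationary A P r \<beta> (det_joint (d K)))"
proof -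
  interpret mv_mapi_run A P r \<beta> d perm
    using game ergodic beta run by (simp add: mv_mapi_run_def mv_mapi_run_axioms_def mv_team_game_def)
  show ?thesis
    using Jmv_hat_pol_Suc_mono(1) Jmv_iterate_mono eventually_const fixed_point_first_order_stationary
    by (simp add: length_perm)
qed

end
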